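(* Let $(\mathcal V,[\cdot,\cdots,\cdot],S)$ be a generalized metric $n$-Leibniz algebra. Define the bilinear form $B$ on $\otimes^{n-1}\mathcal V$ by (bilinear extension of) $$B(u_1\otimes\cdots\otimes u_{n-1},v_1\otimes\cdots\otimes v_{n-1})=S([u_1,\dots,u_{n-1},v_1],v_2,\dots,v_{n-1}).$$ Then $B$ is symmetric and associative-invariant with respect to the bracket $[\cdot,\cdot]_{\mathsf F}$, i.e. $B(U,[V,W]_{\mathsf F})=B([U,V]_{\mathsf F},W)$ for all $U,V,W\in\otimes^{n-1}\mathcal V$.
   Context: All vector spaces are finite-dimensional over $\mathbb R$. An $n$-Leibniz algebra is a vector space $\mathcal V$ with an $n$-linear map $[\cdot,\cdots,\cdot]$ satisfying $[u_1,\dots,u_{n-1},[v_1,\dots,v_n]]=\sum_{i=1}^n[v_1,\dots,[u_1,\dots,u_{n-1},v_i],\dots,v_n]$. A symmetric $S\in\mathrm{Sym}^{n-1}(\mathcal V^* )$ is non-degenerate if $S(u,v_1,\dots,v_{n-2})=0$ for all $v_j$ implies $u=0$. A generalized metric $n$-Leibniz algebra is an $n$-Leibniz algebra with a symmetric non-degenerate $S\in\mathrm{Sym}^{n-1}(\mathcal V^* )$ satisfying (a) unitarity: $\sum_{i=1}^{n-1}S(v_1,\dots,[u_1,\dots,u_{n-1},v_i],\dots,v_{n-1})=0$ and (b) symmetry: $S([u_1,\dots,u_{n-1},v_1],v_2,\dots,v_{n-1})=S([v_1,\dots,v_{n-1},u_1],u_2,\dots,u_{n-1})$. The bracket on $\otimes^{n-1}\mathcal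 V$ is defined on decomposables $U=u_1\otimes\cdots\otimes u_{n-1}$, $V=v_1\otimes\cdots\otimes v_{n-1}$ by $[U,V]_{\mathsf F}=\sum_{i=1}^{n-1}v_1\otimes\cdots\otimes v_{i-1}\otimes[u_1,\dots,u_{n-1},v_i]\otimes v_{i+1}\otimes\cdots\otimes v_{n-1}$ and extended bilinearly; $(\otimes^{n-1}\mathcal V,[\cdot,\cdot]_{\mathsf F})$ is a Leibniz algebra. *)

theory Defs
  imports "HOL-Analysis.Analysis" "HOL-Library.Multiset"
begin

text \<open>An m-ary map on V is modelled as a function on lists; only lists of length m matter.\<close>

definition multilinear_on :: "nat \<Rightarrow> ('v::real_vector list \<Rightarrow> 'b::real_vector) \<Rightarrow> bool" where
  "multilinear_on m f \<longleftrightarrow>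
     (\<forall>xs i. length xs = m \<and> i < m \<longrightarrow> linear (\<lambda>x. f (xs[i := x])))"

definition symmetric_on :: "nat \<Rightarrow> ('v list \<Rightarrow> 'b) \<Rightarrow> bool" where
  "symmetric_on m f \<longleftrightarrow>
     (\<forall>xs ys. length xs = m \<and> mset ys = mset xs \<longrightarrow> f ys = f xs)"

definition n_leibniz :: "nat \<Rightarrow> ('v::real_vector list \<Rightarrow> 'v) \<Rightarrow> bool" where
  "n_leibniz n br \<longleftrightarrow> multilinear_on n br \<and>
     (\<forall>us vs. length us = n - 1 \<and> length vs = n \<longrightarrow>
        br (us @ [br vs]) = (\<Sum>i<n. br (vs[i := br (us @ [vs ! i])])))"

definition nondegenerate :: "nat \<Rightarrow> ('v::real_vector list \<Rightarrow> real) \<Rightarrow> bool" where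
  "nondegenerate n S \<longleftrightarrow>
     (\<forall>u. (\<forall>vs. length vs = n - 2 \<longrightarrow> S (u # vs) = 0) \<longrightarrow> u = 0)"

definition generalized_metric_n_leibniz ::
  "nat \<Rightarrow> ('v::real_vector list \<Rightarrow> 'v) \<Rightarrow> ('v list \<Rightarrow> real) \<Rightarrow> bool" where
  "generalized_metric_n_leibniz n br S \<longleftrightarrow>
     n_leibniz n br \<and> multilinear_on (n - 1) S \<and> symmetric_on (n - 1) S \<and>
     nondegenerate n S \<and>
     (\<forall>us vs. length us = n - 1 \<and> length vs = n - 1 \<longrightarrow>
        (\<Sum>i<n - 1. S (vs[i := br (us @ [vs ! i])])) = 0) \<and>
     (\<forall>us vs. length us = n - 1 \<and> length vs = n - 1 \<longrightarrow>
        S (br (us @ [hd vs]) # tl vs) = S (br (vs @ [hd us]) # tl us))"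

text \<open>Tensor power \<open>\<otimes>^k V\<close> for a finite-dimensional space V (= a euclidean_space type),
  represented by coordinates with respect to the tensor basis
  \<open>e_{i_1} \<otimes> ... \<otimes> e_{i_k}\<close>, indexed by lists of basis vectors of length k.\<close>

definition basis_lists :: "nat \<Rightarrow> 'v::euclidean_space list set" where
  "basis_lists k = {is. length is = k \<and> set is \<subseteq> Basis}"

definition tensors :: "nat \<Rightarrow> ('v::euclidean_space list \<Rightarrow> real) set" where
  "tensors k = {T. \<forall>is. is \<notin> basis_lists k \<longrightarrow> T is = 0}"

definition dec_tensor :: "'v::euclidean_space list \<Rightarrow> ('v list \<Rightarrow> real)" where
  "dec_tensor us = (\<lambda>is. if is \<in> basis_lists (length us)
       then (\<Prod>j<length us. (us ! j) \<bullet> (is ! j)) else 0)"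

definition bracketF_dec :: "nat \<Rightarrow> ('v::euclidean_space list \<Rightarrow> 'v) \<Rightarrow> 'v list \<Rightarrow> 'v list \<Rightarrow> ('v list \<Rightarrow> real)" where
  "bracketF_dec n br us vs =
     (\<lambda>ks. \<Sum>i<n - 1. dec_tensor (vs[i := br (us @ [vs ! i])]) ks)"

definition bracketF :: "nat \<Rightarrow> ('v::euclidean_space list \<Rightarrow> 'v) \<Rightarrow>
     ('v list \<Rightarrow> real) \<Rightarrow> ('v list \<Rightarrow> real) \<Rightarrow> ('v list \<Rightarrow> real)" where
  "bracketF n br U V =
     (\<lambda>ks. \<Sum>is\<in>basis_lists (n - 1). \<Sum>js\<in>basis_lists (n - 1).
        U is * V js * bracketF_dec n br is js ks)"

definition formB_dec :: "('v list \<Rightarrow> 'v) \<Rightarrow> ('v list \<Rightarrow> real) \<Rightarrow> 'v list \<Rightarrow> 'v list \<Rightarrow> real" where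
  "formB_dec br S us vs = S (br (us @ [hd vs]) # tl vs)"

definition formB :: "nat \<Rightarrow> ('v::euclidean_space list \<Rightarrow> 'v) \<Rightarrow> ('v list \<Rightarrow> real) \<Rightarrow>
     ('v list \<Rightarrow> real) \<Rightarrow> ('v list \<Rightarrow> real) \<Rightarrow> real" where
  "formB n br S U V =
     (\<Sum>is\<in>basis_lists (n - 1). \<Sum>js\<in>basis_lists (n - 1).
        U is * V js * formB_dec br S is js)"

end

theory Submission
  imports Defs
begin

(* On decomposables, B(u, [v,w]_F) is S([u,[v,w_1]], w_2, ...) plus the terms in which [v,-] hits
   some w_j with j >= 2. The Leibniz identity splits [u,[v,w_1]] into the terms of B([u,v]_F, w)
   plus [v,[u,w_1]], and unitarity of S at ([u,w_1], w_2, ...) cancels S([v,[u,w_1]], w_2, ...)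
   against the remaining terms. Symmetry of B is condition (b) on basis tensors. Both identities
   pass to arbitrary tensors because the coordinates of a decomposable tensor evaluate every
   multilinear map at its factors, so B and [-,-]_F are the bilinear extensions of their values
   on decomposables. *)

lemma generalized_metric_n_leibnizD:
  assumes "generalized_metric_n_leibniz n br S"
  shows gm_leibniz: "\<And>us vs. length us = n - 1 \<Longrightarrow> length vs = n \<Longrightarrow>
        br (us @ [br vs]) = (\<Sum>i<n. br (vs[i := br (us @ [vs ! i])]))"
    and gm_multilinear_bracket: "multilinear_on n br"
    and gm_multilinear_form: "multilinear_on (n - 1) S"
    and gm_unitary: "\<And>us vs. length us = n - 1 \<Longrightarrow> length vs = n - 1 \<Longrightarrow>
        (\<Sum>i<n - 1. S (vs[i := br (us @ [vs ! i])])) = 0"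
    and gm_symmetric: "\<And>us vs. length us = n - 1 \<Longrightarrow> length vs = n - 1 \<Longrightarrow>
        S (br (us @ [hd vs]) # tl vs) = S (br (vs @ [hd us]) # tl us)"
  using assms unfolding generalized_metric_n_leibniz_def n_leibniz_def by blast+

lemma multilinear_onD:
  assumes "multilinear_on m f" "length xs = m" "i < m"
  shows "linear (\<lambda>x. f (xs[i := x]))"
  using assms unfolding multilinear_on_def by blast

lemma multilinear_on_Cons:
  assumes "multilinear_on (Suc k) f"
  shows "multilinear_on k (\<lambda>xs. f (x # xs))"
  unfolding multilinear_on_def
proof (intro allI impI)
  fix xs :: "'a list" and i
  assume "length xs = k \<and> i < k"
  then have "linear (\<lambda>y. f ((x # xs)[Suc i := y]))"
    using assms by (intro multilinear_onD) auto
  then show "linear (\<lambda>y. f (x # xs[i := y]))" by simp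
qed

lemma multilinear_on_update_sum:
  assumes "multilinear_on m f" "length xs = m" "i < m"
  shows "f (xs[i := \<Sum>a\<in>A. g a]) = (\<Sum>a\<in>A. f (xs[i := g a]))"
  using linear_sum[OF multilinear_onD[OF assms]] by (simp add: o_def)

lemma sum_rotate3:
  "(\<Sum>x\<in>A. \<Sum>y\<in>B. \<Sum>z\<in>C. f x y z) = (\<Sum>z\<in>C. \<Sum>x\<in>A. \<Sum>y\<in>B. f x y z)"
  by (simp add: sum.swap[of _ C])

lemma length_basis_lists: "is \<in> basis_lists k \<Longrightarrow> length is = k"
  by (simp add: basis_lists_def)

lemma basis_lists_Suc: "basis_lists (Suc k) = (\<lambda>(b, is). b # is) ` (Basis \<times> basis_lists k)"
  unfolding basis_lists_def by (auto simp: length_Suc_conv image_iff)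

lemma dec_tensor_Cons:
  assumes "b \<in> Basis" "is \<in> basis_lists (length xs)"
  shows "dec_tensor (x # xs) (b # is) = (x \<bullet> b) * dec_tensor xs is"
proof -
  have "b # is \<in> basis_lists (length (x # xs))"
    using assms by (auto simp: basis_lists_def)
  then show ?thesis
    using assms unfolding dec_tensor_def
    by (simp only: if_True length_Cons prod.lessThan_Suc_shift) simp
qed

lemma sum_dec_tensor_multilinear:
  fixes f :: "'v::euclidean_space list \<Rightarrow> real"
  assumes "multilinear_on k f" "length xs = k"
  shows "(\<Sum>is\<in>basis_lists k. dec_tensor xs is * f is) = f xs"
  using assms
proof (induction k arbitrary: f xs)
  case 0
  then have "basis_lists 0 = {[] :: 'v list}" by (auto simp: basis_lists_def)
  with 0 show ?case by (simp add: dec_tensor_def)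
next
  case (Suc k)
  then obtain x xs' where xs: "xs = x # xs'" and len: "length xs' = k"
    by (auto simp: length_Suc_conv)
  have inj: "inj_on (\<lambda>(b, is). b # is) (Basis \<times> basis_lists k)"
    by (auto simp: inj_on_def)
  have "(\<Sum>is\<in>basis_lists (Suc k). dec_tensor xs is * f is)
      = (\<Sum>b\<in>Basis. \<Sum>is\<in>basis_lists k. dec_tensor xs (b # is) * f (b # is))"
    unfolding basis_lists_Suc sum.reindex[OF inj] sum.cartesian_product by (simp add: case_prod_beta)
  also have "\<dots> = (\<Sum>b\<in>Basis. (x \<bullet> b) * (\<Sum>is\<in>basis_lists k. dec_tensor xs' is * f (b # is)))"
    by (auto intro!: sum.cong simp: xs dec_tensor_Cons len sum_distrib_left mult_ac)
  also have "\<dots> = (\<Sum>b\<in>Basis. (x \<bullet> b) * f (b # xs'))"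
    using Suc.IH[OF multilinear_on_Cons[OF Suc.prems(1)] len] by simp
  also have "\<dots> = (\<Sum>b\<in>Basis. f ((x # xs')[0 := (x \<bullet> b) *\<^sub>R b]))"
    using linear_scale[OF multilinear_onD[OF Suc.prems(1), of "x # xs'" 0]] len by simp
  also have "\<dots> = f ((x # xs')[0 := \<Sum>b\<in>Basis. (x \<bullet> b) *\<^sub>R b])"
    by (rule multilinear_on_update_sum[OF Suc.prems(1), symmetric]) (simp_all add: len)
  also have "\<dots> = f xs"
    by (simp add: xs euclidean_representation)
  finally show ?case .
qed

lemma multilinear_formB_dec_right:
  assumes n: "2 \<le> n" and br: "multilinear_on n br" and S: "multilinear_on (n - 1) S"
    and us: "length us = n - 1"
  shows "multilinear_on (n - 1) (formB_dec br S us)"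
  unfolding multilinear_on_def
proof (intro allI impI)
  fix vs :: "'a list" and i
  assume vs: "length vs = n - 1 \<and> i < n - 1"
  then obtain y ys where vs_eq: "vs = y # ys" using n by (cases vs) auto
  show "linear (\<lambda>x. formB_dec br S us (vs[i := x]))"
  proof (cases i)
    case 0
    have "linear (\<lambda>x. br ((us @ [y])[n - 1 := x]))"
      using br us n by (intro multilinear_onD) auto
    moreover have "linear (\<lambda>x. S ((br (us @ [y]) # ys)[0 := x]))"
      using S vs vs_eq n by (intro multilinear_onD) auto
    ultimately have "linear (\<lambda>x. S (br ((us @ [y])[n - 1 := x]) # ys))"
      using linear_compose by (fastforce simp: o_def)
    then show ?thesis
      using 0 us by (simp add: vs_eq formB_dec_def list_update_append)
  next
    case (Suc j)
    have "linear (\<lambda>x. S ((br (us @ [y]) # ys)[Suc j := x]))"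
      using S vs vs_eq Suc by (intro multilinear_onD) auto
    then show ?thesis using Suc by (simp add: vs_eq formB_dec_def)
  qed
qed

lemma multilinear_formB_dec_left:
  assumes n: "2 \<le> n" and br: "multilinear_on n br" and S: "multilinear_on (n - 1) S"
    and vs: "length vs = n - 1"
  shows "multilinear_on (n - 1) (\<lambda>us. formB_dec br S us vs)"
  unfolding multilinear_on_def
proof (intro allI impI)
  fix us :: "'a list" and i
  assume us: "length us = n - 1 \<and> i < n - 1"
  have "linear (\<lambda>x. br ((us @ [hd vs])[i := x]))"
    using br us n by (intro multilinear_onD) auto
  moreover have "linear (\<lambda>x. S ((br (us @ [hd vs]) # tl vs)[0 := x]))"
    by (rule multilinear_onD[OF S]) (use vs n in auto)
  ultimately have "linear (\<lambda>x. S (br ((us @ [hd vs])[i := x]) # tl vs))"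
    using linear_compose by (fastforce simp: o_def)
  then show "linear (\<lambda>x. formB_dec br S (us[i := x]) vs)"
    using us by (simp add: formB_dec_def list_update_append)
qed

lemma formB_sum_right:
  "formB n br S U (\<lambda>ks. \<Sum>a\<in>A. T a ks) = (\<Sum>a\<in>A. formB n br S U (T a))"
  unfolding formB_def by (simp add: sum_distrib_left sum_distrib_right mult_ac sum.swap[of _ A])

lemma formB_scale_right:
  "formB n br S U (\<lambda>ks. c * T ks) = c * formB n br S U T"
  unfolding formB_def by (simp add: sum_distrib_left mult_ac)

lemma formB_sum_left:
  "formB n br S (\<lambda>ks. \<Sum>a\<in>A. T a ks) V = (\<Sum>a\<in>A. formB n br S (T a) V)"
  unfolding formB_def by (simp add: sum_distrib_left sum_distrib_right mult_ac sum.swap[of _ A])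

lemma formB_scale_left:
  "formB n br S (\<lambda>ks. c * T ks) V = c * formB n br S T V"
  unfolding formB_def by (simp add: sum_distrib_left mult_ac)

lemma formB_dec_tensor_right:
  assumes "2 \<le> n" "multilinear_on n br" "multilinear_on (n - 1) S" "length vs = n - 1"
  shows "formB n br S U (dec_tensor vs)
       = (\<Sum>ks\<in>basis_lists (n - 1). U ks * formB_dec br S ks vs)"
proof -
  have "(\<Sum>ls\<in>basis_lists (n - 1). dec_tensor vs ls * formB_dec br S ks ls) = formB_dec br S ks vs"
    if "ks \<in> basis_lists (n - 1)" for ks
    using that assms
    by (intro sum_dec_tensor_multilinear multilinear_formB_dec_right) (auto simp: length_basis_lists)
  moreover have "formB n br S U (dec_tensor vs)
      = (\<Sum>ks\<in>basis_lists (n - 1).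
           U ks * (\<Sum>ls\<in>basis_lists (n - 1). dec_tensor vs ls * formB_dec br S ks ls))"
    unfolding formB_def by (simp add: sum_distrib_left mult_ac)
  ultimately show ?thesis by simp
qed

lemma formB_dec_tensor_left:
  assumes "2 \<le> n" "multilinear_on n br" "multilinear_on (n - 1) S" "length us = n - 1"
  shows "formB n br S (dec_tensor us) W
       = (\<Sum>ls\<in>basis_lists (n - 1). W ls * formB_dec br S us ls)"
proof -
  have "(\<Sum>ks\<in>basis_lists (n - 1). dec_tensor us ks * formB_dec br S ks ls) = formB_dec br S us ls"
    if "ls \<in> basis_lists (n - 1)" for ls
    using that assms
    by (intro sum_dec_tensor_multilinear multilinear_formB_dec_left) (auto simp: length_basis_lists)
  moreover have "formB n br S (dec_tensor us) W
      = (\<Sum>ls\<in>basis_lists (n - 1).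
           W ls * (\<Sum>ks\<in>basis_lists (n - 1). dec_tensor us ks * formB_dec br S ks ls))"
    unfolding formB_def by (subst sum.swap) (simp add: sum_distrib_left mult_ac)
  ultimately show ?thesis by simp
qed

lemma formB_dec_invariant:
  assumes n: "2 \<le> n" and gm: "generalized_metric_n_leibniz n br S"
    and u: "length u = n - 1" and v: "length v = n - 1" and w: "length w = n - 1"
  shows "(\<Sum>i<n - 1. formB_dec br S u (w[i := br (v @ [w ! i])]))
       = (\<Sum>i<n - 1. formB_dec br S (v[i := br (u @ [v ! i])]) w)"
proof -
  obtain m where m: "n = Suc (Suc m)"
    using n by (metis add_2_eq_Suc le_Suc_ex)
  then obtain w1 w' where w_eq: "w = w1 # w'" and w': "length w' = m"
    using w by (cases w) auto
  define c where "c = br (u @ [w1])"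
  have S_sum: "S ((\<Sum>i\<in>A. x i) # w') = (\<Sum>i\<in>A. S (x i # w'))" for A and x :: "nat \<Rightarrow> 'a"
    using multilinear_on_update_sum[OF gm_multilinear_form[OF gm], of "0 # w'" 0] w' m by simp
  have "S (br (u @ [br (v @ [w1])]) # w')
      = (\<Sum>i<Suc (Suc m). S (br ((v @ [w1])[i := br (u @ [(v @ [w1]) ! i])]) # w'))"
    using gm_leibniz[OF gm, of u "v @ [w1]"] u v m by (simp add: S_sum del: sum.lessThan_Suc)
  also have "\<dots> = (\<Sum>i<Suc m. S (br (v[i := br (u @ [v ! i])] @ [w1]) # w')) + S (br (v @ [c]) # w')"
    using v m by (simp add: list_update_append nth_append c_def)
  finally have leibniz:
    "S (br (u @ [br (v @ [w1])]) # w')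
      = (\<Sum>i<Suc m. S (br (v[i := br (u @ [v ! i])] @ [w1]) # w')) + S (br (v @ [c]) # w')" .
  have unitary: "S (br (v @ [c]) # w') + (\<Sum>j<m. S (c # w'[j := br (v @ [w' ! j])])) = 0"
    using gm_unitary[OF gm, of v "c # w'"] v w' m
    by (simp add: sum.lessThan_Suc_shift del: sum.lessThan_Suc)
  have "(\<Sum>i<n - 1. formB_dec br S u (w[i := br (v @ [w ! i])]))
      = S (br (u @ [br (v @ [w1])]) # w') + (\<Sum>j<m. S (c # w'[j := br (v @ [w' ! j])]))"
    by (simp add: m w_eq formB_dec_def c_def sum.lessThan_Suc_shift del: sum.lessThan_Suc)
  also have "\<dots> = (\<Sum>i<Suc m. S (br (v[i := br (u @ [v ! i])] @ [w1]) # w'))"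
    using leibniz unitary by simp
  also have "\<dots> = (\<Sum>i<n - 1. formB_dec br S (v[i := br (u @ [v ! i])]) w)"
    by (simp add: m w_eq formB_dec_def)
  finally show ?thesis .
qed

lemma formB_commute:
  assumes "generalized_metric_n_leibniz n br S"
  shows "formB n br S U V = formB n br S V U"
  unfolding formB_def
  by (subst sum.swap)
    (auto intro!: sum.cong simp: formB_dec_def gm_symmetric[OF assms] length_basis_lists mult_ac)

lemma formB_bracketF_invariant:
  assumes n: "2 \<le> n" and gm: "generalized_metric_n_leibniz n br S"
  shows "formB n br S U (bracketF n br V W) = formB n br S (bracketF n br U V) W"
proof -
  let ?BL = "basis_lists (n - 1)"
  note multilinear = n gm_multilinear_bracket[OF gm] gm_multilinear_form[OF gm]
  have right: "formB n br S U (bracketF n br V W)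
      = (\<Sum>ks\<in>?BL. \<Sum>ls\<in>?BL. \<Sum>ps\<in>?BL. U ps * V ks * W ls *
           (\<Sum>i<n - 1. formB_dec br S ps (ls[i := br (ks @ [ls ! i])])))"
    unfolding bracketF_def bracketF_dec_def formB_sum_right formB_scale_right
    by (intro sum.cong refl)
      (simp add: formB_dec_tensor_right[OF multilinear] length_basis_lists sum_distrib_left
         mult_ac, rule sum.swap)
  have left: "formB n br S (bracketF n br U V) W
      = (\<Sum>ps\<in>?BL. \<Sum>ks\<in>?BL. \<Sum>ls\<in>?BL. U ps * V ks * W ls *
           (\<Sum>i<n - 1. formB_dec br S (ks[i := br (ps @ [ks ! i])]) ls))"
    unfolding bracketF_def bracketF_dec_def formB_sum_left formB_scale_left
    by (intro sum.cong refl)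
      (simp add: formB_dec_tensor_left[OF multilinear] length_basis_lists sum_distrib_left
         mult_ac, rule sum.swap)
  show ?thesis
    unfolding right left
    by (subst sum_rotate3, intro sum.cong refl, subst formB_dec_invariant[OF n gm])
      (simp_all add: length_basis_lists)
qed

theorem mainTheorem6:
  fixes n :: nat
    and br :: "'v::euclidean_space list \<Rightarrow> 'v"
    and S :: "'v list \<Rightarrow> real"
  assumes "2 \<le> n"
    and "generalized_metric_n_leibniz n br S"
  shows "(\<forall>U\<in>tensors (n - 1). \<forall>V\<in>tensors (n - 1). formB n br S U V = formB n br S V U) \<and>
         (\<forall>U\<in>tensors (n - 1). \<forall>V\<in>tensors (n - 1). \<forall>W\<in>tensors (n - 1).
            formB n br S U (bracketF n br V W) = formB n br S (bracketF n br U V) W)"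
  using formB_commute[OF assms(2)] formB_bracketF_invariant[OF assms] by blast

end
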